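(* Let $\mathcal{A}$ and $\mathcal{B}$ be alternative $W^{*}$-factors with identities $1_{\mathcal{A}},1_{\mathcal{B}}$, with $\mathcal{A}$ containing a projection $p\notin\{0,1_{\mathcal{A}}\}$, and let $\Phi:\mathcal{A}\to\mathcal{B}$ be a bijection satisfying $\Phi(ab-ba^{*})=\Phi(a)\Phi(b)-\Phi(b)\Phi(a)^{*}$ for all $a,b\in\mathcal{A}$. Then $\Phi(\mathbb{R}1_{\mathcal{A}})=\mathbb{R}1_{\mathcal{B}}$; for every $a\in\mathcal{A}$, $a=a^{*}$ if and only if $\Phi(a)=\Phi(a)^{*}$; and $\Phi(\mathbb{C}1_{\mathcal{A}})=\mathbb{C}1_{\mathcal{B}}$.
   Context: An alternative $W^{*}$-factor is a prime alternative $C^{*}$-algebra (complete normed alternative complex $\ast$-algebra with $\|a^{*}a\|=\|a\|^{2}$, where alternative means $a^{2}b=a(ab)$, $ba^{2}=(ba)a$) that is a dual Banach space; it is unital with center $\mathbb{C}1$. A projection is a nonzero self-adjoint idempotent. *)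

theory Defs
  imports "HOL-Analysis.Analysis"
begin

text \<open>Complex vector spaces are not a type class in the distribution, so a complex
normed space is rendered as a real normed space together with an explicit complex
scalar multiplication extending the real one and making the norm complex-homogeneous.\<close>

definition complex_scaling :: "(complex \<Rightarrow> 'a::real_normed_vector \<Rightarrow> 'a) \<Rightarrow> bool" where
  "complex_scaling sc \<longleftrightarrow>
     (\<forall>r a. sc (complex_of_real r) a = r *\<^sub>R a) \<and>
     (\<forall>c d a. sc (c * d) a = sc c (sc d a)) \<and>
     (\<forall>c a b. sc c (a + b) = sc c a + sc c b) \<and>
     (\<forall>c d a. sc (c + d) a = sc c a + sc d a) \<and>
     (\<forall>c a. norm (sc c a) = cmod c * norm a)"

definition alt_cstar_algebra ::
  "(complex \<Rightarrow> 'a::banach \<Rightarrow> 'a) \<Rightarrow> ('a \<Rightarrow> 'a \<Rightarrow> 'a) \<Rightarrow> ('a \<Rightarrow> 'a) \<Rightarrow> bool" where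
  "alt_cstar_algebra sc mul st \<longleftrightarrow>
     complex_scaling sc \<and>
     (\<forall>a b c. mul (a + b) c = mul a c + mul b c) \<and>
     (\<forall>a b c. mul a (b + c) = mul a b + mul a c) \<and>
     (\<forall>z a b. mul (sc z a) b = sc z (mul a b)) \<and>
     (\<forall>z a b. mul a (sc z b) = sc z (mul a b)) \<and>
     (\<forall>a b. norm (mul a b) \<le> norm a * norm b) \<and>
     (\<forall>a. st (st a) = a) \<and>
     (\<forall>a b. st (a + b) = st a + st b) \<and>
     (\<forall>z a. st (sc z a) = sc (cnj z) (st a)) \<and>
     (\<forall>a b. st (mul a b) = mul (st b) (st a)) \<and>
     (\<forall>a. norm (mul (st a) a) = (norm a)\<^sup>2) \<and>
     (\<forall>a b. mul (mul a a) b = mul a (mul a b)) \<and>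
     (\<forall>a b. mul b (mul a a) = mul (mul b a) a)"

definition alg_ideal ::
  "(complex \<Rightarrow> 'a::banach \<Rightarrow> 'a) \<Rightarrow> ('a \<Rightarrow> 'a \<Rightarrow> 'a) \<Rightarrow> 'a set \<Rightarrow> bool" where
  "alg_ideal sc mul I \<longleftrightarrow>
     0 \<in> I \<and> (\<forall>x\<in>I. \<forall>y\<in>I. x + y \<in> I) \<and> (\<forall>c. \<forall>x\<in>I. sc c x \<in> I) \<and>
     (\<forall>x\<in>I. \<forall>a. mul a x \<in> I \<and> mul x a \<in> I)"

definition alg_prime ::
  "(complex \<Rightarrow> 'a::banach \<Rightarrow> 'a) \<Rightarrow> ('a \<Rightarrow> 'a \<Rightarrow> 'a) \<Rightarrow> bool" where
  "alg_prime sc mul \<longleftrightarrow>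
     (\<forall>I J. alg_ideal sc mul I \<and> alg_ideal sc mul J \<and> (\<forall>x\<in>I. \<forall>y\<in>J. mul x y = 0)
        \<longrightarrow> I = {0} \<or> J = {0})"

definition cdual :: "(complex \<Rightarrow> 'x::real_normed_vector \<Rightarrow> 'x) \<Rightarrow> ('x \<Rightarrow> complex) set" where
  "cdual sx = {f. bounded_linear f \<and> (\<forall>c x. f (sx c x) = c * f x)}"

definition is_dual_of ::
  "(complex \<Rightarrow> 'a::banach \<Rightarrow> 'a) \<Rightarrow> (complex \<Rightarrow> 'x::real_normed_vector \<Rightarrow> 'x) \<Rightarrow> bool" where
  "is_dual_of sc sx \<longleftrightarrow>
     complex_scaling sx \<and>
     (\<exists>T. bij_betw T UNIV (cdual sx) \<and>
          (\<forall>a b. T (a + b) = (\<lambda>x. T a x + T b x)) \<and>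
          (\<forall>c a. T (sc c a) = (\<lambda>x. c * T a x)) \<and>
          (\<forall>a. onorm (T a) = norm a))"

text \<open>Alternative W*-factor: prime alternative C*-algebra which is a dual Banach space
(predual of type 'x). The identity e is supplied as data (it is unique).\<close>

definition alt_W_factor ::
  "(complex \<Rightarrow> 'a::banach \<Rightarrow> 'a) \<Rightarrow> ('a \<Rightarrow> 'a \<Rightarrow> 'a) \<Rightarrow> ('a \<Rightarrow> 'a) \<Rightarrow>
   (complex \<Rightarrow> 'x::real_normed_vector \<Rightarrow> 'x) \<Rightarrow> bool" where
  "alt_W_factor sc mul st sx \<longleftrightarrow>
     alt_cstar_algebra sc mul st \<and> alg_prime sc mul \<and> is_dual_of sc sx"

definition is_identity :: "('a \<Rightarrow> 'a \<Rightarrow> 'a) \<Rightarrow> 'a \<Rightarrow> bool" where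
  "is_identity mul e \<longleftrightarrow> (\<forall>a. mul e a = a \<and> mul a e = a)"

definition is_projection :: "('a::zero \<Rightarrow> 'a \<Rightarrow> 'a) \<Rightarrow> ('a \<Rightarrow> 'a) \<Rightarrow> 'a \<Rightarrow> bool" where
  "is_projection mul st p \<longleftrightarrow> p \<noteq> 0 \<and> st p = p \<and> mul p p = p"

end

theory Submission
  imports Defs
begin

text \<open>The heart of the matter is that the centre of a prime unital alternative C*-algebra
  is \<open>\<complex>e\<close>. The binomial series of \<open>\<surd>(1 - t)\<close> has
  absolutely summable coefficients, so for central \<open>y\<close> with \<open>\<parallel>y\<parallel> \<le> 1\<close> it converges to a
  central square root of \<open>e - y\<close>, self-adjoint if \<open>y\<close> is. With the C*-identity this shows
  that a central self-adjoint \<open>x\<close> with \<open>\<parallel>e - x\<parallel> \<le> 1\<close> and \<open>\<parallel>e + x\<parallel> \<le> 1\<close> is zero, while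
  primeness, which makes the centre free of zero divisors, forces one of these two bounds
  whenever \<open>\<parallel>x\<parallel> \<le> 1\<close>. Applied to \<open>g - \<lambda>e\<close> for small central self-adjoint \<open>g\<close>, a
  connectedness argument in \<open>\<lambda> \<in> [-1/2, 1/2]\<close> yields \<open>g \<in> \<real>e\<close>.

  For the skew commutator \<open>[a, b] = ab - ba\<^sup>*\<close>, the real multiples of \<open>e\<close> are then exactly
  the \<open>a\<close> with \<open>[a, b] = 0\<close> for all \<open>b\<close>, and the complex multiples those with \<open>[b, a] = 0\<close>
  for all self-adjoint \<open>b\<close>. The bijection \<open>\<Phi>\<close> transports the first condition; it maps
  some \<open>te\<close> to \<open>e\<close>, and \<open>[a, te] = t(a - a\<^sup>*)\<close> shows that it preserves self-adjointness,
  hence also the second condition.\<close>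

section \<open>Coefficients of the binomial series of the square root\<close>

definition sqrt_coeff :: "nat \<Rightarrow> real" where
  "sqrt_coeff n = pochhammer (-1/2) n / fact n"

lemma sqrt_coeff_gchoose: "sqrt_coeff n = (-1)^n * ((1/2::real) gchoose n)"
  by (simp add: sqrt_coeff_def gbinomial_pochhammer)

lemma sqrt_coeff_0 [simp]: "sqrt_coeff 0 = 1"
  by (simp add: sqrt_coeff_def)

lemma sqrt_coeff_Suc_nonpos: "sqrt_coeff (Suc n) \<le> 0"
proof -
  have "pochhammer (-1/2::real) (Suc n) = (-1/2) * pochhammer (1/2) n"
    by (simp add: pochhammer_rec)
  moreover have "pochhammer (1/2::real) n \<ge> 0"
    by (rule pochhammer_nonneg) simp
  ultimately show ?thesis
    unfolding sqrt_coeff_def by (simp add: divide_nonpos_pos mult_nonpos_nonneg)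
qed

text \<open>The Cauchy square of the series is the series of \<open>1 - x\<close>; this is Vandermonde's
  identity for \<open>1/2 + 1/2 = 1\<close>.\<close>

lemma sqrt_coeff_convolution:
  "(\<Sum>i\<le>k. sqrt_coeff i * sqrt_coeff (k - i)) = (if k = 0 then 1 else if k = 1 then -1 else 0)"
proof -
  have "(\<Sum>i\<le>k. sqrt_coeff i * sqrt_coeff (k - i))
      = (\<Sum>i\<le>k. (-1)^k * (((1/2::real) gchoose i) * ((1/2) gchoose (k - i))))"
  proof (rule sum.cong)
    fix i assume "i \<in> {..k}"
    hence "(-1::real)^i * (-1)^(k-i) = (-1)^k"
      by (simp add: power_add[symmetric])
    thus "sqrt_coeff i * sqrt_coeff (k - i) = (-1)^k * (((1/2::real) gchoose i) * ((1/2) gchoose (k - i)))"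
      unfolding sqrt_coeff_gchoose by (metis (no_types, lifting) mult.assoc mult.left_commute)
  qed simp
  also have "\<dots> = (-1)^k * (\<Sum>i=0..k. ((1/2::real) gchoose i) * ((1/2) gchoose (k - i)))"
    by (simp add: sum_distrib_left atLeast0AtMost)
  also have "\<dots> = (-1)^k * ((1::real) gchoose k)"
    by (subst gbinomial_Vandermonde) simp
  also have "((1::real) gchoose k) = of_nat (1 choose k)"
    using binomial_gbinomial[of 1 k, where 'a=real] by simp
  finally show ?thesis
    by (cases k; cases "k = 1"; auto simp: binomial_eq_0)
qed

lemma sqrt_coeff_partial_sum: "(\<Sum>i\<le>m. sqrt_coeff i) = pochhammer (1/2) m / fact m"
proof -
  have "(\<Sum>i\<le>m. sqrt_coeff i) = (\<Sum>i\<le>m. ((1/2::real) gchoose i) * (-1)^i)"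
    by (simp add: sqrt_coeff_gchoose mult.commute)
  also have "\<dots> = (-1)^m * ((1/2 - 1::real) gchoose m)"
    by (rule gbinomial_sum_lower_neg)
  also have "\<dots> = pochhammer (1/2) m / fact m"
    by (simp add: gbinomial_pochhammer)
  finally show ?thesis .
qed

text \<open>All coefficients but the first are \<open>\<le> 0\<close> and the partial sums are \<open>\<ge> 0\<close>,
  so the absolute values sum to at most \<open>2\<close>.\<close>

lemma sum_abs_sqrt_coeff_le: "(\<Sum>i\<le>m. \<bar>sqrt_coeff i\<bar>) \<le> 2"
proof -
  have "(\<Sum>i\<le>m. \<bar>sqrt_coeff i\<bar>) = (\<Sum>i\<le>m. (if i = 0 then 2 else 0) - sqrt_coeff i)"
  proof (rule sum.cong)
    fix i show "\<bar>sqrt_coeff i\<bar> = (if i = 0 then 2 else 0) - sqrt_coeff i"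
      using sqrt_coeff_Suc_nonpos[of "i - 1"] by (cases i) auto
  qed simp
  also have "\<dots> = 2 - (\<Sum>i\<le>m. sqrt_coeff i)"
    by (simp add: sum_subtractf)
  also have "(\<Sum>i\<le>m. sqrt_coeff i) \<ge> 0"
    unfolding sqrt_coeff_partial_sum by (intro divide_nonneg_pos pochhammer_nonneg) auto
  ultimately show ?thesis by linarith
qed

lemma summable_abs_sqrt_coeff: "summable (\<lambda>n. \<bar>sqrt_coeff n\<bar>)"
proof (rule summableI_nonneg_bounded[where x=2])
  fix n show "(\<Sum>i<n. \<bar>sqrt_coeff i\<bar>) \<le> 2"
    using sum_abs_sqrt_coeff_le[of "n - 1"] by (cases n) (auto simp: lessThan_Suc_atMost)
qed simp

lemma suminf_abs_sqrt_coeff_Suc_le: "(\<Sum>n. \<bar>sqrt_coeff (Suc n)\<bar>) \<le> 1"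
proof -
  have "(\<Sum>n. \<bar>sqrt_coeff n\<bar>) \<le> 2"
    using summable_abs_sqrt_coeff sum_abs_sqrt_coeff_le
    by (intro LIMSEQ_le_const2[OF summable_LIMSEQ']) auto
  moreover have "(\<Sum>n. \<bar>sqrt_coeff (Suc n)\<bar>) = (\<Sum>n. \<bar>sqrt_coeff n\<bar>) - 1"
    using suminf_split_head[OF summable_abs_sqrt_coeff] by simp
  ultimately show ?thesis by simp
qed

definition square_corner :: "nat \<Rightarrow> (nat \<times> nat) set" where
  "square_corner N = {(i, j). i \<le> N \<and> j \<le> N \<and> N < i + j}"

lemma finite_square_corner [simp]: "finite (square_corner N)"
  unfolding square_corner_def by (rule finite_subset[of _ "{..N} \<times> {..N}"]) auto

lemma sum_square_eq_triangle_plus_corner: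
  fixes f :: "nat \<Rightarrow> nat \<Rightarrow> 'b::comm_monoid_add"
  shows "(\<Sum>i\<le>N. \<Sum>j\<le>N. f i j) =
         (\<Sum>k\<le>N. \<Sum>i\<le>k. f i (k - i)) + (\<Sum>(i, j)\<in>square_corner N. f i j)"
proof -
  have "(\<Sum>i\<le>N. \<Sum>j\<le>N. f i j) = (\<Sum>(i, j)\<in>{..N} \<times> {..N}. f i j)"
    by (simp add: sum.cartesian_product)
  also have "{..N} \<times> {..N} = {(i, j). i + j \<le> N} \<union> square_corner N"
    by (auto simp: square_corner_def)
  also have "(\<Sum>(i, j)\<in>\<dots>. f i j) =
      (\<Sum>(i, j)\<in>{(i, j). i + j \<le> N}. f i j) + (\<Sum>(i, j)\<in>square_corner N. f i j)"
  proof (rule sum.union_disjoint)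
    show "finite {(i, j). i + j \<le> N}"
      by (rule finite_subset[of _ "{..N} \<times> {..N}"]) auto
    show "finite (square_corner N)"
      by simp
  qed (auto simp: square_corner_def)
  also have "(\<Sum>(i, j)\<in>{(i, j). i + j \<le> N}. f i j) = (\<Sum>k\<le>N. \<Sum>i\<le>k. f i (k - i))"
    by (rule sum.triangle_reindex_eq)
  finally show ?thesis .
qed

text \<open>The corner is the difference between the square of a partial sum and the
  partial sum of the Cauchy product, and both converge to the square of the sum.\<close>

lemma corner_sum_tendsto_0:
  fixes a :: "nat \<Rightarrow> real"
  assumes nonneg: "\<And>n. a n \<ge> 0" and summable: "summable a"
  shows "(\<lambda>N. \<Sum>(i, j)\<in>square_corner N. a i * a j) \<longlonglongrightarrow> 0"
proof -
  have norm_summable: "summable (\<lambda>n. norm (a n))"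
    using summable nonneg by simp
  have corner_eq: "(\<Sum>(i, j)\<in>square_corner N. a i * a j) =
      (\<Sum>i\<le>N. a i) * (\<Sum>j\<le>N. a j) - (\<Sum>k\<le>N. \<Sum>i\<le>k. a i * a (k - i))" for N
    using sum_square_eq_triangle_plus_corner[of "\<lambda>i j. a i * a j" N] by (simp add: sum_product)
  have square: "(\<lambda>N. (\<Sum>i\<le>N. a i) * (\<Sum>j\<le>N. a j)) \<longlonglongrightarrow> suminf a * suminf a"
    by (intro tendsto_mult summable_LIMSEQ' summable)
  have "(\<lambda>k. \<Sum>i\<le>k. a i * a (k - i)) sums (suminf a * suminf a)"
    by (rule Cauchy_product_sums[OF norm_summable norm_summable])
  hence product: "(\<lambda>N. \<Sum>k\<le>N. \<Sum>i\<le>k. a i * a (k - i)) \<longlonglongrightarrow> suminf a * suminf a"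
    using summable_LIMSEQ' sums_summable sums_unique by metis
  show ?thesis
    unfolding corner_eq using tendsto_diff[OF square product] by simp
qed

section \<open>Unital alternative C*-algebras\<close>

lemma scaleR_half_plus_half:
  fixes a :: "'a::real_vector"
  shows "(1/2) *\<^sub>R a + (1/2) *\<^sub>R a = a"
  by (metis scaleR_add_right scaleR_half_double)

locale unital_alt_cstar =
  fixes sc :: "complex \<Rightarrow> 'a::banach \<Rightarrow> 'a" and mul :: "'a \<Rightarrow> 'a \<Rightarrow> 'a"
    and st :: "'a \<Rightarrow> 'a" and e :: 'a
  assumes alt_cstar: "alt_cstar_algebra sc mul st" and identity: "is_identity mul e"
begin

lemma sc_of_real: "sc (complex_of_real r) a = r *\<^sub>R a"
  using alt_cstar by (simp add: alt_cstar_algebra_def complex_scaling_def)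
lemma sc_mult: "sc (c * d) a = sc c (sc d a)"
  using alt_cstar by (simp add: alt_cstar_algebra_def complex_scaling_def)
lemma sc_add: "sc c (a + b) = sc c a + sc c b"
  using alt_cstar by (simp add: alt_cstar_algebra_def complex_scaling_def)
lemma sc_add_left: "sc (c + d) a = sc c a + sc d a"
  using alt_cstar by (simp add: alt_cstar_algebra_def complex_scaling_def)
lemma mul_add_left: "mul (a + b) c = mul a c + mul b c"
  using alt_cstar by (simp add: alt_cstar_algebra_def)
lemma mul_add_right: "mul a (b + c) = mul a b + mul a c"
  using alt_cstar by (simp add: alt_cstar_algebra_def)
lemma mul_sc_left: "mul (sc z a) b = sc z (mul a b)"
  using alt_cstar by (simp add: alt_cstar_algebra_def)
lemma mul_sc_right: "mul a (sc z b) = sc z (mul a b)"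
  using alt_cstar by (simp add: alt_cstar_algebra_def)
lemma norm_mul_le: "norm (mul a b) \<le> norm a * norm b"
  using alt_cstar by (simp add: alt_cstar_algebra_def)
lemma st_st [simp]: "st (st a) = a"
  using alt_cstar by (simp add: alt_cstar_algebra_def)
lemma st_add: "st (a + b) = st a + st b"
  using alt_cstar by (simp add: alt_cstar_algebra_def)
lemma st_sc: "st (sc z a) = sc (cnj z) (st a)"
  using alt_cstar by (simp add: alt_cstar_algebra_def)
lemma st_mul: "st (mul a b) = mul (st b) (st a)"
  using alt_cstar by (simp add: alt_cstar_algebra_def)
lemma norm_mul_st_self: "norm (mul (st a) a) = (norm a)\<^sup>2"
  using alt_cstar by (simp add: alt_cstar_algebra_def)
lemma left_alternative: "mul (mul a a) b = mul a (mul a b)"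
  using alt_cstar by (simp add: alt_cstar_algebra_def)
lemma right_alternative: "mul b (mul a a) = mul (mul b a) a"
  using alt_cstar by (simp add: alt_cstar_algebra_def)
lemma mul_e_left [simp]: "mul e a = a" and mul_e_right [simp]: "mul a e = a"
  using identity by (auto simp: is_identity_def)

lemma sc_zero [simp]: "sc c 0 = 0"
  using sc_add[of c 0 0] by simp
lemma sc_zero_left [simp]: "sc 0 a = 0"
  using sc_of_real[of 0 a] by simp
lemma sc_one [simp]: "sc 1 a = a"
  using sc_of_real[of 1 a] by simp
lemma sc_minus_left: "sc (- c) a = - sc c a"
  using sc_add_left[of c "-c" a] by (simp add: add_eq_0_iff)
lemma sc_minus: "sc c (- a) = - sc c a"
  using sc_add[of c a "-a"] by (simp add: add_eq_0_iff)
lemma sc_diff: "sc c (a - b) = sc c a - sc c b"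
  using sc_add[of c a "-b"] sc_minus by simp
lemma sc_ii_ii: "sc \<i> (sc \<i> a) = - a"
  by (simp add: sc_mult[symmetric] sc_minus_left)

lemma mul_0_left [simp]: "mul 0 a = 0"
  using mul_add_left[of 0 0 a] by simp
lemma mul_0_right [simp]: "mul a 0 = 0"
  using mul_add_right[of a 0 0] by simp
lemma mul_minus_left: "mul (- a) b = - mul a b"
  using mul_add_left[of a "-a" b] by (simp add: add_eq_0_iff)
lemma mul_minus_right: "mul a (- b) = - mul a b"
  using mul_add_right[of a b "-b"] by (simp add: add_eq_0_iff)
lemma mul_diff_left: "mul (a - b) c = mul a c - mul b c"
  using mul_add_left[of a "-b" c] mul_minus_left by simp
lemma mul_diff_right: "mul a (b - c) = mul a b - mul a c"
  using mul_add_right[of a b "-c"] mul_minus_right by simp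
lemma mul_scaleR_left: "mul (r *\<^sub>R a) b = r *\<^sub>R mul a b"
  using mul_sc_left[of "complex_of_real r" a b] by (simp add: sc_of_real)
lemma mul_scaleR_right: "mul a (r *\<^sub>R b) = r *\<^sub>R mul a b"
  using mul_sc_right[of a "complex_of_real r" b] by (simp add: sc_of_real)

lemmas mul_distribs = mul_add_left mul_add_right mul_diff_left mul_diff_right
  mul_minus_left mul_minus_right mul_sc_left mul_sc_right mul_scaleR_left mul_scaleR_right

lemma st_0 [simp]: "st 0 = 0"
  using st_add[of 0 0] by simp
lemma st_minus: "st (- a) = - st a"
  using st_add[of a "-a"] by (simp add: add_eq_0_iff)
lemma st_diff: "st (a - b) = st a - st b"
  using st_add[of a "-b"] st_minus by simp
lemma st_scaleR: "st (r *\<^sub>R a) = r *\<^sub>R st a"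
  using st_sc[of "complex_of_real r" a] by (simp add: sc_of_real[symmetric])

lemma st_e [simp]: "st e = e"
proof -
  have "st e = mul (st e) e" by simp
  also have "\<dots> = st (mul (st e) e)" by (simp only: st_mul st_st)
  also have "\<dots> = e" by simp
  finally show ?thesis .
qed

lemma norm_st [simp]: "norm (st a) = norm a"
proof -
  have le: "norm b \<le> norm (st b)" for b
  proof (cases "b = 0")
    case False
    have "(norm b)\<^sup>2 \<le> norm (st b) * norm b"
      using norm_mul_st_self[of b] norm_mul_le[of "st b" b] by simp
    thus ?thesis using False by (simp add: power2_eq_square)
  qed simp
  show ?thesis using le[of a] le[of "st a"] by simp
qed

lemma norm_e_cases: "e = 0 \<or> norm e = 1"
proof -
  have "norm e = (norm e)\<^sup>2" using norm_mul_st_self[of e] by simp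
  hence "norm e * (norm e - 1) = 0" by (simp add: power2_eq_square algebra_simps)
  thus ?thesis by auto
qed

lemma norm_e_le_1: "norm e \<le> 1"
  using norm_e_cases by auto

lemma bounded_bilinear_mul: "bounded_bilinear mul"
proof
  show "\<exists>K. \<forall>a b. norm (mul a b) \<le> norm a * norm b * K"
    by (rule exI[of _ 1]) (simp add: norm_mul_le)
qed (simp_all add: mul_distribs)

lemma bounded_linear_st: "bounded_linear st"
proof
  show "\<exists>K. \<forall>a. norm (st a) \<le> norm a * K"
    by (rule exI[of _ 1]) simp
qed (simp_all add: st_add st_scaleR)

definition associator :: "'a \<Rightarrow> 'a \<Rightarrow> 'a \<Rightarrow> 'a" where
  "associator x y z = mul (mul x y) z - mul x (mul y z)"

definition central :: "'a \<Rightarrow> bool" where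
  "central a \<longleftrightarrow> (\<forall>b. mul a b = mul b a)"

text \<open>Linearising the alternative laws makes the associator alternating.\<close>

lemma associator_swap_12: "associator x y z = - associator y x z"
proof -
  have "mul (mul (x + y) (x + y)) z = mul (x + y) (mul (x + y) z)"
    by (rule left_alternative)
  thus ?thesis
    unfolding associator_def using left_alternative[of x z] left_alternative[of y z]
    by (simp add: mul_distribs algebra_simps)
qed

lemma associator_swap_23: "associator x y z = - associator x z y"
proof -
  have "mul x (mul (y + z) (y + z)) = mul (mul x (y + z)) (y + z)"
    by (rule right_alternative)
  thus ?thesis
    unfolding associator_def using right_alternative[of x y] right_alternative[of x z]
    by (simp add: mul_distribs algebra_simps)
qed

text \<open>For central \<open>z\<close> the commutator \<open>[xy, z]\<close> expands into an alternating sum of three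
  associators, each equal to \<open>associator x y z\<close>; so three times it vanishes.\<close>

lemma associator_central_right:
  assumes "central z"
  shows "associator x y z = 0"
proof -
  have comm: "mul z b = mul b z" for b
    using assms unfolding central_def by blast
  have "associator x y z - associator x z y + associator z x y = 0"
    unfolding associator_def by (simp add: comm[of "mul x y"] comm[of y] comm[of x])
  moreover have "associator x z y = - associator x y z" "associator z x y = associator x y z"
    using associator_swap_23[of x z y] associator_swap_12[of z x y] by simp_all
  ultimately have "(3::real) *\<^sub>R associator x y z = 0"
    by (simp add: scaleR_add_left[of 2 1, simplified] scaleR_2)
  thus ?thesis by simp
qed

lemma central_associative:
  assumes "central z"
  shows "mul (mul x y) z = mul x (mul y z)" "mul (mul x z) y = mul x (mul z y)"
    "mul (mul z x) y = mul z (mul x y)"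
proof -
  have xyz: "associator x y z = 0"
    by (rule associator_central_right[OF assms])
  hence xzy: "associator x z y = 0"
    using associator_swap_23[of x z y] by simp
  hence "associator z x y = 0"
    using associator_swap_12[of z x y] by simp
  with xyz xzy show "mul (mul x y) z = mul x (mul y z)" "mul (mul x z) y = mul x (mul z y)"
    "mul (mul z x) y = mul z (mul x y)" unfolding associator_def by simp_all
qed

lemma central_mul:
  assumes u: "central u" and v: "central v"
  shows "central (mul u v)"
  unfolding central_def
proof
  fix b
  have "mul (mul u v) b = mul u (mul v b)" using central_associative(3)[OF u] by simp
  also have "\<dots> = mul u (mul b v)" using v by (simp add: central_def)
  also have "\<dots> = mul (mul u b) v" using central_associative(1)[OF v] by simp
  also have "\<dots> = mul (mul b u) v" using u by (simp add: central_def)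
  also have "\<dots> = mul b (mul u v)" using central_associative(1)[OF v] by simp
  finally show "mul (mul u v) b = mul b (mul u v)" .
qed

lemma mul_left_commute_central:
  assumes w: "central w"
  shows "mul a (mul w b) = mul w (mul a b)"
proof -
  have comm: "mul w c = mul c w" for c
    using w by (simp add: central_def)
  have "mul a (mul w b) = mul a (mul b w)"
    by (simp only: comm[of b])
  also have "\<dots> = mul (mul a b) w"
    using central_associative(1)[OF w] by simp
  also have "\<dots> = mul w (mul a b)"
    by (simp only: comm[of "mul a b"])
  finally show ?thesis .
qed

lemma alg_ideal_range_mul_central:
  assumes w: "central w"
  shows "alg_ideal sc mul (range (mul w))"
  unfolding alg_ideal_def
proof (intro conjI ballI allI)
  show "0 \<in> range (mul w)"
    using mul_0_right by (metis rangeI)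
next
  fix x y assume "x \<in> range (mul w)" "y \<in> range (mul w)"
  then obtain a b where "x = mul w a" "y = mul w b" by blast
  thus "x + y \<in> range (mul w)"
    by (simp add: mul_add_right[symmetric])
next
  fix c x assume "x \<in> range (mul w)"
  then obtain a where "x = mul w a" by blast
  thus "sc c x \<in> range (mul w)"
    by (simp add: mul_sc_right[symmetric])
next
  fix x a assume "x \<in> range (mul w)"
  then obtain b where x: "x = mul w b" by blast
  have "mul a x = mul w (mul a b)"
    unfolding x by (rule mul_left_commute_central[OF w])
  moreover have "mul x a = mul w (mul b a)"
    unfolding x using central_associative(3)[OF w] by simp
  ultimately show "mul a x \<in> range (mul w)" "mul x a \<in> range (mul w)"
    by simp_all
qed

lemma central_e: "central e"
  by (simp add: central_def)
lemma central_add: "central a \<Longrightarrow> central b \<Longrightarrow> central (a + b)"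
  by (simp add: central_def mul_distribs)
lemma central_diff: "central a \<Longrightarrow> central b \<Longrightarrow> central (a - b)"
  by (simp add: central_def mul_distribs)
lemma central_scaleR: "central a \<Longrightarrow> central (r *\<^sub>R a)"
  by (simp add: central_def mul_distribs)
lemma central_sc: "central a \<Longrightarrow> central (sc c a)"
  by (simp add: central_def mul_distribs)

lemma central_st: "central a \<Longrightarrow> central (st a)"
  unfolding central_def by (metis st_mul st_st)

primrec apow :: "nat \<Rightarrow> 'a \<Rightarrow> 'a" where
  "apow 0 y = e"
| "apow (Suc n) y = mul y (apow n y)"

lemma central_apow: "central y \<Longrightarrow> central (apow n y)"
  by (induction n) (auto intro: central_mul central_e)

lemma apow_add: "central y \<Longrightarrow> apow (m + n) y = mul (apow m y) (apow n y)"
  by (induction m) (simp_all add: central_associative(3))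

lemma norm_apow_le_1: "norm y \<le> 1 \<Longrightarrow> norm (apow n y) \<le> 1"
proof (induction n)
  case (Suc n)
  have "norm (apow (Suc n) y) \<le> norm y * norm (apow n y)"
    using norm_mul_le by simp
  also have "\<dots> \<le> 1"
    using Suc by (intro mult_le_one) auto
  finally show ?case .
qed (simp add: norm_e_le_1)

lemma st_apow: "central y \<Longrightarrow> st y = y \<Longrightarrow> st (apow n y) = apow n y"
  by (induction n) (simp_all add: st_mul central_def)

text \<open>The binomial series of \<open>\<surd>(e - y)\<close>; only meaningful for \<open>norm y \<le> 1\<close>, otherwise
  \<open>suminf\<close> returns an unspecified value.\<close>

definition sqrt_e_minus :: "'a \<Rightarrow> 'a" where
  "sqrt_e_minus y = (\<Sum>n. sqrt_coeff n *\<^sub>R apow n y)"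

definition sqrt_e_minus_partial :: "nat \<Rightarrow> 'a \<Rightarrow> 'a" where
  "sqrt_e_minus_partial N y = (\<Sum>n\<le>N. sqrt_coeff n *\<^sub>R apow n y)"

lemma norm_sqrt_coeff_apow_le:
  "norm y \<le> 1 \<Longrightarrow> norm (sqrt_coeff n *\<^sub>R apow n y) \<le> \<bar>sqrt_coeff n\<bar>"
  using norm_apow_le_1 by (auto intro!: mult_left_le)

lemma summable_norm_sqrt_e_minus:
  "norm y \<le> 1 \<Longrightarrow> summable (\<lambda>n. norm (sqrt_coeff n *\<^sub>R apow n y))"
  by (rule summable_comparison_test[OF _ summable_abs_sqrt_coeff])
    (use norm_sqrt_coeff_apow_le in simp)

lemma summable_sqrt_e_minus: "norm y \<le> 1 \<Longrightarrow> summable (\<lambda>n. sqrt_coeff n *\<^sub>R apow n y)"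
  by (rule summable_norm_cancel[OF summable_norm_sqrt_e_minus])

lemma central_sqrt_e_minus:
  assumes y: "central y" "norm y \<le> 1"
  shows "central (sqrt_e_minus y)"
  unfolding central_def
proof
  fix b
  have "mul (sqrt_e_minus y) b = (\<Sum>n. mul (sqrt_coeff n *\<^sub>R apow n y) b)"
    unfolding sqrt_e_minus_def
    by (rule bounded_linear.suminf[OF bounded_bilinear.bounded_linear_left[OF bounded_bilinear_mul]
          summable_sqrt_e_minus[OF y(2)]])
  also have "\<dots> = (\<Sum>n. mul b (sqrt_coeff n *\<^sub>R apow n y))"
    using central_apow[OF y(1)] by (simp add: central_def mul_scaleR_left mul_scaleR_right)
  also have "\<dots> = mul b (sqrt_e_minus y)"
    unfolding sqrt_e_minus_def
    by (rule bounded_linear.suminf[OF bounded_bilinear.bounded_linear_right[OF bounded_bilinear_mul]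
          summable_sqrt_e_minus[OF y(2)], symmetric])
  finally show "mul (sqrt_e_minus y) b = mul b (sqrt_e_minus y)" .
qed

lemma st_sqrt_e_minus:
  assumes y: "central y" "norm y \<le> 1" "st y = y"
  shows "st (sqrt_e_minus y) = sqrt_e_minus y"
proof -
  have "st (sqrt_e_minus y) = (\<Sum>n. st (sqrt_coeff n *\<^sub>R apow n y))"
    unfolding sqrt_e_minus_def
    by (rule bounded_linear.suminf[OF bounded_linear_st summable_sqrt_e_minus[OF y(2)]])
  also have "\<dots> = sqrt_e_minus y"
    unfolding sqrt_e_minus_def using st_apow[OF y(1,3)] by (simp add: st_scaleR)
  finally show ?thesis .
qed

lemma norm_e_minus_sqrt_e_minus_le:
  assumes y: "norm y \<le> 1"
  shows "norm (e - sqrt_e_minus y) \<le> 1"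
proof -
  let ?f = "\<lambda>n. sqrt_coeff n *\<^sub>R apow n y"
  have summable_tail: "summable (\<lambda>n. norm (?f (Suc n)))"
    using summable_Suc_iff[THEN iffD2, OF summable_norm_sqrt_e_minus[OF y]] by simp
  have "(\<Sum>n. ?f (Suc n)) = sqrt_e_minus y - e"
    unfolding sqrt_e_minus_def using suminf_split_head[OF summable_sqrt_e_minus[OF y]] by simp
  hence "norm (e - sqrt_e_minus y) = norm (\<Sum>n. ?f (Suc n))"
    by (simp add: norm_minus_commute)
  also have "\<dots> \<le> (\<Sum>n. norm (?f (Suc n)))"
    by (rule summable_norm[OF summable_tail])
  also have "\<dots> \<le> (\<Sum>n. \<bar>sqrt_coeff (Suc n)\<bar>)"
    by (rule suminf_le[OF norm_sqrt_coeff_apow_le[OF y] summable_tail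
          summable_Suc_iff[THEN iffD2, OF summable_abs_sqrt_coeff]])
  also have "\<dots> \<le> 1"
    by (rule suminf_abs_sqrt_coeff_Suc_le)
  finally show ?thesis .
qed

text \<open>The terms of the square with \<open>i + j \<le> N\<close> collapse to \<open>e - y\<close> by
  \<open>sqrt_coeff_convolution\<close>.\<close>

lemma sqrt_e_minus_partial_square:
  assumes y: "central y" and N: "N \<ge> 1"
  shows "mul (sqrt_e_minus_partial N y) (sqrt_e_minus_partial N y) =
    (e - y) + (\<Sum>(i, j)\<in>square_corner N. (sqrt_coeff i * sqrt_coeff j) *\<^sub>R apow (i + j) y)"
proof -
  let ?c = "\<lambda>i j. (sqrt_coeff i * sqrt_coeff j) *\<^sub>R apow (i + j) y"
  have "mul (sqrt_e_minus_partial N y) (sqrt_e_minus_partial N y) =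
      (\<Sum>j\<le>N. \<Sum>i\<le>N. mul (sqrt_coeff i *\<^sub>R apow i y) (sqrt_coeff j *\<^sub>R apow j y))"
    unfolding sqrt_e_minus_partial_def
    by (simp only: bounded_bilinear.sum_left[OF bounded_bilinear_mul]
        bounded_bilinear.sum_right[OF bounded_bilinear_mul])
  also have "\<dots> = (\<Sum>i\<le>N. \<Sum>j\<le>N. mul (sqrt_coeff i *\<^sub>R apow i y) (sqrt_coeff j *\<^sub>R apow j y))"
    by (rule sum.swap)
  also have "\<dots> = (\<Sum>i\<le>N. \<Sum>j\<le>N. ?c i j)"
    by (simp add: mul_scaleR_left mul_scaleR_right apow_add[OF y] mult.commute)
  also have "\<dots> = (\<Sum>k\<le>N. \<Sum>i\<le>k. ?c i (k - i)) + (\<Sum>(i, j)\<in>square_corner N. ?c i j)"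
    by (rule sum_square_eq_triangle_plus_corner)
  also have "(\<Sum>k\<le>N. \<Sum>i\<le>k. ?c i (k - i)) =
      (\<Sum>k\<le>N. (\<Sum>i\<le>k. sqrt_coeff i * sqrt_coeff (k - i)) *\<^sub>R apow k y)"
    by (simp add: scaleR_sum_left)
  also have "\<dots> = (\<Sum>k\<le>N. (if k = 0 then 1 else if k = 1 then -1 else 0) *\<^sub>R apow k y)"
    by (simp add: sqrt_coeff_convolution)
  also have "\<dots> = (\<Sum>k\<in>{0, 1}. (if k = 0 then 1 else if k = 1 then -1 else 0) *\<^sub>R apow k y)"
    by (rule sum.mono_neutral_right) (use N in auto)
  also have "\<dots> = e - y"
    by simp
  finally show ?thesis .
qed

lemma norm_sqrt_e_minus_partial_square_error_le:
  assumes y: "central y" "norm y \<le> 1" and N: "N \<ge> 1"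
  shows "norm (mul (sqrt_e_minus_partial N y) (sqrt_e_minus_partial N y) - (e - y))
    \<le> (\<Sum>(i, j)\<in>square_corner N. \<bar>sqrt_coeff i\<bar> * \<bar>sqrt_coeff j\<bar>)"
proof -
  have "norm (mul (sqrt_e_minus_partial N y) (sqrt_e_minus_partial N y) - (e - y))
      \<le> (\<Sum>(i, j)\<in>square_corner N. norm ((sqrt_coeff i * sqrt_coeff j) *\<^sub>R apow (i + j) y))"
    unfolding sqrt_e_minus_partial_square[OF y(1) N] add_diff_cancel_left'
    by (rule norm_sum[THEN order_trans]) (simp add: case_prod_unfold)
  also have "\<dots> \<le> (\<Sum>(i, j)\<in>square_corner N. \<bar>sqrt_coeff i\<bar> * \<bar>sqrt_coeff j\<bar>)"
    using norm_apow_le_1[OF y(2)]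
    by (intro sum_mono) (auto simp: abs_mult case_prod_unfold intro!: mult_left_le)
  finally show ?thesis .
qed

lemma sqrt_e_minus_square:
  assumes y: "central y" "norm y \<le> 1"
  shows "mul (sqrt_e_minus y) (sqrt_e_minus y) = e - y"
proof -
  let ?P = "\<lambda>N. sqrt_e_minus_partial N y"
  have "?P \<longlonglongrightarrow> sqrt_e_minus y"
    unfolding sqrt_e_minus_partial_def sqrt_e_minus_def
    by (rule summable_LIMSEQ'[OF summable_sqrt_e_minus[OF y(2)]])
  hence "(\<lambda>N. mul (?P N) (?P N)) \<longlonglongrightarrow> mul (sqrt_e_minus y) (sqrt_e_minus y)"
    by (intro bounded_bilinear.tendsto[OF bounded_bilinear_mul])
  moreover have "(\<lambda>N. mul (?P N) (?P N) - (e - y)) \<longlonglongrightarrow> 0"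
  proof (rule Lim_null_comparison)
    show "\<forall>\<^sub>F N in sequentially. norm (mul (?P N) (?P N) - (e - y))
        \<le> (\<Sum>(i, j)\<in>square_corner N. \<bar>sqrt_coeff i\<bar> * \<bar>sqrt_coeff j\<bar>)"
      by (rule eventually_sequentiallyI[of 1]) (rule norm_sqrt_e_minus_partial_square_error_le[OF y])
  qed (rule corner_sum_tendsto_0[OF abs_ge_zero summable_abs_sqrt_coeff])
  hence "(\<lambda>N. mul (?P N) (?P N)) \<longlonglongrightarrow> e - y"
    by (rule LIM_zero_cancel)
  ultimately show ?thesis
    using LIMSEQ_unique by blast
qed

end

context unital_alt_cstar
begin

lemma norm_square_le_norm_sum_squares:
  assumes a: "central a" "st a = a" and b: "central b" "st b = b"
  shows "(norm a)\<^sup>2 \<le> norm (mul a a + mul b b)"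
proof -
  define u where "u = a - sc \<i> b"
  have st_u: "st u = a + sc \<i> b"
    unfolding u_def using a b by (simp add: st_diff st_sc sc_minus_left)
  have "mul b a = mul a b"
    using b by (simp add: central_def)
  hence "mul (a + sc \<i> b) (a - sc \<i> b) = mul a a + mul b b"
    by (simp add: mul_distribs sc_ii_ii sc_add sc_diff)
  hence "mul (st u) u = mul a a + mul b b"
    by (simp only: st_u) (simp only: u_def)
  hence "norm (mul a a + mul b b) = (norm u)\<^sup>2"
    using norm_mul_st_self[of u] by simp
  moreover have "norm a \<le> norm u"
  proof -
    have "u + st u = a + a"
      by (simp only: st_u) (simp add: u_def)
    hence "norm a = (1/2) * norm (u + st u)"
      by (simp add: scaleR_2[symmetric])
    also have "\<dots> \<le> (1/2) * (norm u + norm (st u))"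
      by (intro mult_left_mono norm_triangle_ineq) simp
    finally show ?thesis
      by simp
  qed
  ultimately show ?thesis
    by (simp add: power_mono)
qed

text \<open>Square roots \<open>q\<close> of \<open>x\<close> and \<open>r\<close> of \<open>-x\<close> give \<open>\<parallel>q\<parallel>\<^sup>2 \<le> \<parallel>q\<^sup>2 + r\<^sup>2\<parallel> = 0\<close>.\<close>

lemma central_selfadjoint_eq_0_if_norms_le_1:
  assumes x: "central x" "st x = x"
    and minus: "norm (e - x) \<le> 1" and plus: "norm (e + x) \<le> 1"
  shows "x = 0"
proof -
  have cm: "central (e - x)" "st (e - x) = e - x"
    using x by (simp_all add: central_diff central_e st_diff)
  have cp: "central (e + x)" "st (e + x) = e + x"
    using x by (simp_all add: central_add central_e st_add)
  define q where "q = sqrt_e_minus (e - x)"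
  define r where "r = sqrt_e_minus (e + x)"
  have q: "central q" "st q = q" "mul q q = x"
    unfolding q_def using central_sqrt_e_minus[OF cm(1) minus] st_sqrt_e_minus[OF cm(1) minus cm(2)]
      sqrt_e_minus_square[OF cm(1) minus] by simp_all
  have r: "central r" "st r = r" "mul r r = - x"
    unfolding r_def using central_sqrt_e_minus[OF cp(1) plus] st_sqrt_e_minus[OF cp(1) plus cp(2)]
      sqrt_e_minus_square[OF cp(1) plus] by simp_all
  have "(norm q)\<^sup>2 \<le> norm (mul q q + mul r r)"
    by (rule norm_square_le_norm_sum_squares[OF q(1,2) r(1,2)])
  hence "q = 0"
    using q(3) r(3) by simp
  thus ?thesis
    using q(3) by simp
qed

lemma norm_e_minus_square_le_1:
  assumes x: "central x" "st x = x" "norm x \<le> 1"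
  shows "norm (e - mul x x) \<le> 1"
proof -
  have xx: "central (mul x x)" "st (mul x x) = mul x x"
    using x by (simp_all add: central_mul st_mul)
  have nxx: "norm (mul x x) \<le> 1"
    using norm_mul_le[of x x] mult_le_one[OF x(3) norm_ge_zero x(3)] by linarith
  define s where "s = sqrt_e_minus (mul x x)"
  have s: "central s" "st s = s" "mul s s = e - mul x x"
    unfolding s_def using central_sqrt_e_minus[OF xx(1) nxx] st_sqrt_e_minus[OF xx(1) nxx xx(2)]
      sqrt_e_minus_square[OF xx(1) nxx] by simp_all
  have "norm (e - mul x x) = (norm s)\<^sup>2"
    using norm_mul_st_self[of s] s by simp
  also have "\<dots> \<le> norm (mul s s + mul x x)"
    by (rule norm_square_le_norm_sum_squares[OF s(1,2) x(1,2)])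
  also have "\<dots> \<le> 1"
    using s(3) norm_e_le_1 by simp
  finally show ?thesis .
qed

definition re_part :: "'a \<Rightarrow> 'a" where
  "re_part a = (1/2) *\<^sub>R (a + st a)"

definition im_part :: "'a \<Rightarrow> 'a" where
  "im_part a = sc (- \<i>) ((1/2) *\<^sub>R (a - st a))"

lemma re_im_decomposition: "a = re_part a + sc \<i> (im_part a)"
proof -
  have "sc \<i> (sc (- \<i>) b) = b" for b
    by (simp add: sc_mult[symmetric])
  thus ?thesis
    unfolding re_part_def im_part_def by (simp add: algebra_simps scaleR_half_plus_half)
qed

lemma st_re_part: "st (re_part a) = re_part a"
  unfolding re_part_def by (simp add: st_scaleR st_add add.commute)

lemma st_im_part: "st (im_part a) = im_part a"
  unfolding im_part_def
  by (simp add: st_minus st_sc st_scaleR st_diff sc_minus_left sc_diff sc_minus scaleR_diff_right)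

lemma central_re_part: "central a \<Longrightarrow> central (re_part a)"
  unfolding re_part_def by (intro central_scaleR central_add central_st)

lemma central_im_part: "central a \<Longrightarrow> central (im_part a)"
  unfolding im_part_def by (intro central_sc central_scaleR central_diff central_st)

lemma central_iff_commutes_with_selfadjoint:
  "central a \<longleftrightarrow> (\<forall>b. st b = b \<longrightarrow> mul b a = mul a b)"
proof
  assume "\<forall>b. st b = b \<longrightarrow> mul b a = mul a b"
  hence re: "mul (re_part b) a = mul a (re_part b)" and im: "mul (im_part b) a = mul a (im_part b)"
    for b by (simp_all add: st_re_part st_im_part)
  show "central a"
    unfolding central_def
  proof
    fix b
    have "mul a b = mul a (re_part b) + sc \<i> (mul a (im_part b))"
      by (subst re_im_decomposition) (simp add: mul_distribs)
    also have "\<dots> = mul b a"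
      by (subst (3) re_im_decomposition) (simp add: mul_distribs re im)
    finally show "mul a b = mul b a" .
  qed
qed (simp add: central_def)

end

section \<open>The centre of a prime unital alternative C*-algebra\<close>

locale prime_unital_alt_cstar = unital_alt_cstar +
  assumes prime: "alg_prime sc mul"
begin

text \<open>The ideals \<open>u\<cdot>A\<close> and \<open>v\<cdot>A\<close> annihilate each other.\<close>

lemma central_mul_eq_0:
  assumes u: "central u" and v: "central v" and uv: "mul u v = 0"
  shows "u = 0 \<or> v = 0"
proof -
  have "mul (mul u a) (mul v b) = 0" for a b
  proof -
    have "mul (mul u a) (mul v b) = mul u (mul a (mul v b))"
      using central_associative(3)[OF u] by simp
    also have "mul a (mul v b) = mul v (mul a b)"
      by (rule mul_left_commute_central[OF v])
    also have "mul u (mul v (mul a b)) = mul (mul u v) (mul a b)"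
      using central_associative(3)[OF u] by simp
    finally show ?thesis
      using uv by simp
  qed
  hence "range (mul u) = {0} \<or> range (mul v) = {0}"
    using prime alg_ideal_range_mul_central[OF u] alg_ideal_range_mul_central[OF v]
    unfolding alg_prime_def by blast
  thus ?thesis
    by (metis mul_e_right rangeI singletonD)
qed

text \<open>With \<open>w = \<surd>(e - (e - x\<^sup>2))\<close> we get \<open>(w - x)(w + x) = 0\<close>, so \<open>x = \<plusminus>w\<close>.\<close>

lemma norm_e_minus_or_plus_le_1:
  assumes x: "central x" "st x = x" "norm x \<le> 1"
  shows "norm (e - x) \<le> 1 \<or> norm (e + x) \<le> 1"
proof -
  define y where "y = e - mul x x"
  have y: "central y" "norm y \<le> 1"
    unfolding y_def using norm_e_minus_square_le_1[OF x] x
    by (simp_all add: central_diff central_e central_mul)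
  define w where "w = sqrt_e_minus y"
  have w: "central w" "mul w w = mul x x" "norm (e - w) \<le> 1"
    unfolding w_def using central_sqrt_e_minus[OF y] sqrt_e_minus_square[OF y]
      norm_e_minus_sqrt_e_minus_le[OF y(2)] by (simp_all add: y_def)
  have "mul x w = mul w x"
    using w(1) by (simp add: central_def)
  hence "mul (w - x) (w + x) = 0"
    by (simp add: mul_distribs w(2))
  hence "w - x = 0 \<or> w + x = 0"
    by (intro central_mul_eq_0) (simp_all add: central_diff central_add w(1) x(1))
  hence "x = w \<or> x = - w"
    by (auto simp: add.commute eq_neg_iff_add_eq_0)
  thus ?thesis
    using w(3) by auto
qed

text \<open>On \<open>[-1/2, 1/2]\<close> the closed sets of \<open>\<lambda>\<close> with \<open>g - \<lambda>e\<close> in the unit ball around \<open>e\<close> resp. \<open>-e\<close>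
  cover the interval and contain one endpoint each, so by connectedness they meet.\<close>

lemma small_central_selfadjoint_in_real_span:
  assumes g: "central g" "st g = g" and norm_g: "norm g \<le> 1/4" and norm_e: "norm e = 1"
  shows "\<exists>l. g = l *\<^sub>R e"
proof -
  define x where "x l = g - l *\<^sub>R e" for l :: real
  have x: "central (x l)" "st (x l) = x l" for l
    unfolding x_def using g by (simp_all add: central_diff central_scaleR central_e st_diff st_scaleR)
  have norm_x: "norm (x l) \<le> 1" if "l \<in> {-1/2..1/2}" for l
  proof -
    have "norm (x l) \<le> norm g + norm (l *\<^sub>R e)"
      unfolding x_def by (rule norm_triangle_ineq4)
    also have "\<dots> \<le> 1/4 + 1/2"
      using norm_g that norm_e by (intro add_mono) auto
    finally show ?thesis by simp
  qed
  define A where "A = {l. norm (e - x l) \<le> 1}"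
  define B where "B = {l. norm (e + x l) \<le> 1}"
  have "closed A" "closed B"
    unfolding A_def B_def x_def by (intro closed_Collect_le continuous_intros)+
  moreover have "{-1/2..1/2} \<subseteq> A \<union> B"
    using norm_e_minus_or_plus_le_1[OF x norm_x] unfolding A_def B_def by blast
  moreover have "-1/2 \<in> {-1/2..1/2::real}" "1/2 \<in> {-1/2..1/2::real}"
    by simp_all
  moreover have "-1/2 \<in> A"
  proof -
    have "e - x (-1/2) = ((1/2) *\<^sub>R e + (1/2) *\<^sub>R e) - (g + (1/2) *\<^sub>R e)"
      by (simp add: x_def scaleR_half_plus_half)
    also have "\<dots> = (1/2) *\<^sub>R e - g"
      by (simp add: algebra_simps)
    finally show ?thesis
      using norm_triangle_ineq4[of "(1/2) *\<^sub>R e" g] norm_g norm_e unfolding A_def by simp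
  qed
  moreover have "1/2 \<in> B"
  proof -
    have "e + x (1/2) = ((1/2) *\<^sub>R e + (1/2) *\<^sub>R e) + (g - (1/2) *\<^sub>R e)"
      by (simp add: x_def scaleR_half_plus_half)
    also have "\<dots> = (1/2) *\<^sub>R e + g"
      by (simp add: algebra_simps)
    finally show ?thesis
      using norm_triangle_ineq[of "(1/2) *\<^sub>R e" g] norm_g norm_e unfolding B_def by simp
  qed
  ultimately have "A \<inter> B \<inter> {-1/2..1/2} \<noteq> {}"
    using connected_Icc[of "-1/2::real" "1/2"] unfolding connected_closed by blast
  then obtain l where "l \<in> A" "l \<in> B"
    by blast
  hence "x l = 0"
    using central_selfadjoint_eq_0_if_norms_le_1[OF x] unfolding A_def B_def by blast
  thus ?thesis
    unfolding x_def by auto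
qed

lemma central_selfadjoint_in_real_span:
  assumes h: "central h" "st h = h"
  shows "\<exists>r. h = r *\<^sub>R e"
proof (cases "e = 0")
  case True
  thus ?thesis
    using mul_e_left[of h] by auto
next
  case False
  hence norm_e: "norm e = 1"
    using norm_e_cases by auto
  define k where "k = 1 / (4 * (norm h + 1))"
  have "4 * (norm h + 1) > 0"
    by (smt (verit) norm_ge_zero)
  hence k: "k > 0"
    unfolding k_def by simp
  have "norm (k *\<^sub>R h) \<le> 1/4"
    using \<open>4 * (norm h + 1) > 0\<close> by (simp add: k_def divide_le_eq)
  then obtain l where "k *\<^sub>R h = l *\<^sub>R e"
    using small_central_selfadjoint_in_real_span[of "k *\<^sub>R h"] h norm_e
    by (auto simp: central_scaleR st_scaleR)
  have "h = (1 / k) *\<^sub>R (k *\<^sub>R h)"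
    using k by simp
  also have "\<dots> = (l / k) *\<^sub>R e"
    using \<open>k *\<^sub>R h = l *\<^sub>R e\<close> by simp
  finally show ?thesis ..
qed

lemma central_iff_in_complex_span: "central a \<longleftrightarrow> a \<in> range (\<lambda>c. sc c e)"
proof
  assume a: "central a"
  obtain r where r: "re_part a = r *\<^sub>R e"
    using central_selfadjoint_in_real_span[OF central_re_part[OF a] st_re_part] by blast
  obtain s where s: "im_part a = s *\<^sub>R e"
    using central_selfadjoint_in_real_span[OF central_im_part[OF a] st_im_part] by blast
  have "a = r *\<^sub>R e + sc \<i> (s *\<^sub>R e)"
    using re_im_decomposition[of a] r s by simp
  also have "\<dots> = sc (complex_of_real r + \<i> * complex_of_real s) e"
    by (simp add: sc_of_real[symmetric] sc_add_left sc_mult)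
  finally show "a \<in> range (\<lambda>c. sc c e)"
    by blast
qed (auto simp: central_def mul_distribs)

end

context unital_alt_cstar
begin

definition skew_comm :: "'a \<Rightarrow> 'a \<Rightarrow> 'a" where
  "skew_comm a b = mul a b - mul b (st a)"

end

context prime_unital_alt_cstar
begin

lemma skew_comm_eq_0_iff_in_real_span:
  "(\<forall>b. skew_comm a b = 0) \<longleftrightarrow> a \<in> range (\<lambda>r::real. r *\<^sub>R e)"
proof
  assume H: "\<forall>b. skew_comm a b = 0"
  have a: "st a = a"
    using H[rule_format, of e] by (simp add: skew_comm_def)
  hence "central a"
    using H by (simp add: skew_comm_def central_def)
  thus "a \<in> range (\<lambda>r::real. r *\<^sub>R e)"
    using central_selfadjoint_in_real_span[OF _ a] by blast
qed (auto simp: skew_comm_def mul_distribs st_scaleR)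

lemma skew_comm_selfadjoint_eq_0_iff_in_complex_span:
  "(\<forall>b. st b = b \<longrightarrow> skew_comm b a = 0) \<longleftrightarrow> a \<in> range (\<lambda>c. sc c e)"
  unfolding central_iff_in_complex_span[symmetric] central_iff_commutes_with_selfadjoint
  by (auto simp: skew_comm_def)

end

section \<open>Bijections preserving the skew commutator\<close>

locale skew_comm_preserving_bij =
  A: prime_unital_alt_cstar scA mulA stA eA + B: prime_unital_alt_cstar scB mulB stB eB
  for scA :: "complex \<Rightarrow> 'a::banach \<Rightarrow> 'a" and mulA stA eA
    and scB :: "complex \<Rightarrow> 'b::banach \<Rightarrow> 'b" and mulB stB eB +
  fixes \<Phi> :: "'a \<Rightarrow> 'b"
  assumes bij: "bij \<Phi>"
    and preserves: "\<And>a b. \<Phi> (mulA a b - mulA b (stA a)) = mulB (\<Phi> a) (\<Phi> b) - mulB (\<Phi> b) (stB (\<Phi> a))"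
begin

lemma Phi_skew_comm: "\<Phi> (A.skew_comm a b) = B.skew_comm (\<Phi> a) (\<Phi> b)"
  unfolding A.skew_comm_def B.skew_comm_def by (rule preserves)

lemma all_Phi_iff: "(\<forall>b. P b) \<longleftrightarrow> (\<forall>a. P (\<Phi> a))"
  using bij_is_surj[OF bij] by (metis surjD)

lemma Phi_0: "\<Phi> 0 = 0"
proof -
  obtain a where "\<Phi> a = 0"
    using all_Phi_iff[of "\<lambda>b. b \<noteq> 0"] by blast
  thus ?thesis
    using preserves[of a 0] by simp
qed

lemma Phi_eq_0_iff: "\<Phi> a = 0 \<longleftrightarrow> a = 0"
  using bij_is_inj[OF bij] Phi_0 by (metis injD)

lemma image_eq_if_Phi_preserves_membership:
  assumes "\<And>a. a \<in> X \<longleftrightarrow> \<Phi> a \<in> Y"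
  shows "\<Phi> ` X = Y"
proof -
  have "X = \<Phi> -` Y"
    using assms by blast
  thus ?thesis
    using surj_image_vimage_eq[OF bij_is_surj[OF bij]] by simp
qed

lemma image_real_span: "\<Phi> ` range (\<lambda>r::real. r *\<^sub>R eA) = range (\<lambda>r::real. r *\<^sub>R eB)"
proof (rule image_eq_if_Phi_preserves_membership)
  fix a
  have "a \<in> range (\<lambda>r::real. r *\<^sub>R eA) \<longleftrightarrow> (\<forall>b. B.skew_comm (\<Phi> a) (\<Phi> b) = 0)"
    unfolding A.skew_comm_eq_0_iff_in_real_span[symmetric] Phi_skew_comm[symmetric] Phi_eq_0_iff ..
  also have "\<dots> \<longleftrightarrow> \<Phi> a \<in> range (\<lambda>r::real. r *\<^sub>R eB)"
    unfolding B.skew_comm_eq_0_iff_in_real_span[symmetric] all_Phi_iff[of "\<lambda>b. B.skew_comm _ b = 0"] ..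
  finally show "a \<in> range (\<lambda>r::real. r *\<^sub>R eA) \<longleftrightarrow> \<Phi> a \<in> range (\<lambda>r::real. r *\<^sub>R eB)" .
qed

text \<open>Some \<open>t eA\<close> is mapped to \<open>eB\<close>, and \<open>skew_comm a (t eA) = t (a - a\<^sup>*)\<close>.\<close>

lemma selfadjoint_iff:
  assumes "eB \<noteq> 0"
  shows "stA a = a \<longleftrightarrow> stB (\<Phi> a) = \<Phi> a"
proof -
  have "eB \<in> \<Phi> ` range (\<lambda>r::real. r *\<^sub>R eA)"
    unfolding image_real_span by (rule range_eqI[of _ _ 1]) simp
  then obtain t :: real where t: "\<Phi> (t *\<^sub>R eA) = eB"
    by blast
  have "t \<noteq> 0"
    using t Phi_0 assms by auto
  have "stB (\<Phi> a) = \<Phi> a \<longleftrightarrow> B.skew_comm (\<Phi> a) (\<Phi> (t *\<^sub>R eA)) = 0"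
    unfolding t B.skew_comm_def by auto
  also have "\<dots> \<longleftrightarrow> t *\<^sub>R (a - stA a) = 0"
    unfolding Phi_skew_comm[symmetric] Phi_eq_0_iff A.skew_comm_def
    by (simp add: A.mul_distribs algebra_simps)
  also have "\<dots> \<longleftrightarrow> stA a = a"
    using \<open>t \<noteq> 0\<close> by auto
  finally show ?thesis ..
qed

lemma image_complex_span:
  assumes "eB \<noteq> 0"
  shows "\<Phi> ` range (\<lambda>c. scA c eA) = range (\<lambda>c. scB c eB)"
proof (rule image_eq_if_Phi_preserves_membership)
  fix a
  have "a \<in> range (\<lambda>c. scA c eA) \<longleftrightarrow>
      (\<forall>b. stB (\<Phi> b) = \<Phi> b \<longrightarrow> B.skew_comm (\<Phi> b) (\<Phi> a) = 0)"
    unfolding A.skew_comm_selfadjoint_eq_0_iff_in_complex_span[symmetric] Phi_skew_comm[symmetric]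
      Phi_eq_0_iff selfadjoint_iff[OF assms] ..
  also have "\<dots> \<longleftrightarrow> \<Phi> a \<in> range (\<lambda>c. scB c eB)"
    unfolding B.skew_comm_selfadjoint_eq_0_iff_in_complex_span[symmetric]
      all_Phi_iff[of "\<lambda>b. stB b = b \<longrightarrow> B.skew_comm b _ = 0"] ..
  finally show "a \<in> range (\<lambda>c. scA c eA) \<longleftrightarrow> \<Phi> a \<in> range (\<lambda>c. scB c eB)" .
qed

end

theorem lemma2p8:
  fixes scA :: "complex \<Rightarrow> 'a::banach \<Rightarrow> 'a" and mulA :: "'a \<Rightarrow> 'a \<Rightarrow> 'a"
    and stA :: "'a \<Rightarrow> 'a" and eA :: 'a and sxA :: "complex \<Rightarrow> 'x::real_normed_vector \<Rightarrow> 'x"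
    and scB :: "complex \<Rightarrow> 'b::banach \<Rightarrow> 'b" and mulB :: "'b \<Rightarrow> 'b \<Rightarrow> 'b"
    and stB :: "'b \<Rightarrow> 'b" and eB :: 'b and sxB :: "complex \<Rightarrow> 'y::real_normed_vector \<Rightarrow> 'y"
    and p :: 'a and \<Phi> :: "'a \<Rightarrow> 'b"
  assumes A: "alt_W_factor scA mulA stA sxA" and eA: "is_identity mulA eA"
    and B: "alt_W_factor scB mulB stB sxB" and eB: "is_identity mulB eB"
    and p: "is_projection mulA stA p" and p1: "p \<noteq> eA"
    and bij: "bij \<Phi>"
    and hom: "\<And>a b. \<Phi> (mulA a b - mulA b (stA a)) = mulB (\<Phi> a) (\<Phi> b) - mulB (\<Phi> b) (stB (\<Phi> a))"
  shows "\<Phi> ` range (\<lambda>r::real. r *\<^sub>R eA) = range (\<lambda>r::real. r *\<^sub>R eB) \<and>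
         (\<forall>a. stA a = a \<longleftrightarrow> stB (\<Phi> a) = \<Phi> a) \<and>
         \<Phi> ` range (\<lambda>c. scA c eA) = range (\<lambda>c. scB c eB)"
proof -
  interpret skew_comm_preserving_bij scA mulA stA eA scB mulB stB eB \<Phi>
    using A eA B eB bij hom by unfold_locales (auto simp: alt_W_factor_def)
  have "eB \<noteq> 0"
  proof
    assume "eB = 0"
    hence "\<Phi> p = 0"
      using B.mul_e_left[of "\<Phi> p"] by simp
    thus False
      using p Phi_eq_0_iff unfolding is_projection_def by simp
  qed
  thus ?thesis
    using image_real_span selfadjoint_iff image_complex_span by blast
qed

end
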